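(* Let $n=p_1^{\alpha_1}p_2^{\alpha_2}\cdots p_r^{\alpha_r}$, where $r\geq 2$, $\alpha_1,\ldots,\alpha_r$ are positive integers and $p_1<p_2<\cdots<p_r$ are primes. Suppose that at least one of the following holds: (i) $2\phi(p_1p_2\cdots p_r)\geq p_1p_2\cdots p_r$; (ii) $\phi(p_{i+1})\geq r\,\phi(p_i)$ for each $i\in\{1,2,\ldots,r-1\}$. Let $t\in\{2,3,\ldots,r\}$ be the largest integer such that $\alpha_t\geq\alpha_j$ for all $2\leq j\leq r$. Then $$\delta(\mathcal{P}(C_n))=\min\{\deg(p_s^{\alpha_s}) : t\leq s\leq r\}.$$
   Context: For a finite group $G$, the power graph $\mathcal{P}(G)$ is the simple undirected graph with vertex set $G$ in which two distinct vertices are adjacent if one is an integral power of the other. $C_n$ denotes the cyclic group of order $n$, identified with $\mathbb{Z}_n=\{0,1,\ldots,n-1\}$, so a positive divisor $d<n$ of $n$ is regarded as the element $d\in\mathbb{Z}_n$. $\deg(a)$ is the degree of vertex $a$ in $\mathcal{P}(C_n)$, $\delta$ denotes minimum degree, and $\phi$ is Euler's totient function. *)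

theory Defs
  imports "HOL-Number_Theory.Number_Theory"
begin

text \<open>Power graph of the cyclic group C_n, identified with Z_n = {0,...,n-1} under
  addition mod n. The integral powers of a are the multiples k*a mod n.\<close>

definition cyc_power :: "nat \<Rightarrow> nat \<Rightarrow> nat \<Rightarrow> bool" where
  "cyc_power n a b \<longleftrightarrow> (\<exists>k::int. int b = (k * int a) mod int n)"

definition pg_adj :: "nat \<Rightarrow> nat \<Rightarrow> nat \<Rightarrow> bool" where
  "pg_adj n a b \<longleftrightarrow> a \<in> {0..<n} \<and> b \<in> {0..<n} \<and> a \<noteq> b \<and>
     (cyc_power n a b \<or> cyc_power n b a)"

definition pg_deg :: "nat \<Rightarrow> nat \<Rightarrow> nat" where
  "pg_deg n a = card {b \<in> {0..<n}. pg_adj n a b}"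

definition pg_min_deg :: "nat \<Rightarrow> nat" where
  "pg_min_deg n = Min (pg_deg n ` {0..<n})"

end

theory Submission
  imports Defs
begin

text \<open>The degree of \<open>a\<close> in \<open>\<P>(C\<^sub>n)\<close> depends only on \<open>e = gcd a n\<close>: the closed
  neighbourhood of \<open>a\<close> consists of the multiples of \<open>e\<close> and of the \<open>y\<close> with \<open>gcd y n\<close>
  dividing \<open>e\<close>, so \<open>deg a + 1 = n/e + B(n,e) - \<phi>(n/e)\<close>, where \<open>B(n,e)\<close> counts the
  latter \<open>y\<close> and is multiplicative by the Chinese remainder theorem. With this formula,
  among the powers of \<open>p\<^sub>k\<close> the full power \<open>p\<^sub>k\<^sup>\<alpha>\<^sub>k\<close> has the least degree, and
  removing from a divisor \<open>e\<close> the full power of its least prime factor does not increase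
  the degree; the latter needs (i) or (ii), as a lower bound on \<open>\<phi>(m)/m\<close>. So every degree
  is at least that of some \<open>p\<^sub>k\<^sup>\<alpha>\<^sub>k\<close>, and it remains to see
  \<open>deg (p\<^sub>t\<^sup>\<alpha>\<^sub>t) \<le> deg (p\<^sub>j\<^sup>\<alpha>\<^sub>j)\<close> for \<open>j < t\<close>, again by (i) or (ii)
  after writing the difference over the common factor formed by the other prime powers.\<close>

section \<open>Counting residues\<close>

lemma card_periodic:
  fixes P :: "nat \<Rightarrow> bool"
  assumes periodic: "\<And>y. P (y + m) = P y"
  shows "card {y\<in>{..<c * m}. P y} = c * card {y\<in>{..<m}. P y}"
proof (induction c)
  case 0
  then show ?case by simp
next
  case (Suc c)
  have shift: "P (c * m + z) = P z" for z
  proof (induction c)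
    case (Suc c)
    then show ?case using periodic [of "c * m + z"] by (simp add: algebra_simps)
  qed simp
  have split: "{y\<in>{..<Suc c * m}. P y} = {y\<in>{..<c * m}. P y} \<union> (\<lambda>z. c * m + z) ` {z\<in>{..<m}. P z}"
  proof (intro equalityI subsetI)
    fix y assume y: "y \<in> {y\<in>{..<Suc c * m}. P y}"
    show "y \<in> {y\<in>{..<c * m}. P y} \<union> (\<lambda>z. c * m + z) ` {z\<in>{..<m}. P z}"
    proof (cases "y < c * m")
      case False
      then obtain z where "y = c * m + z" "z < m"
        using y by (metis add_less_cancel_left le_iff_add mem_Collect_eq lessThan_iff mult_Suc not_less add.commute)
      then show ?thesis using y shift by auto
    qed (use y in auto)
  qed (use shift in auto)
  have "card ((\<lambda>z. c * m + z) ` {z\<in>{..<m}. P z}) = card {z\<in>{..<m}. P z}"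
    by (rule card_image) (auto simp: inj_on_def)
  moreover have "card {y\<in>{..<Suc c * m}. P y}
      = card {y\<in>{..<c * m}. P y} + card ((\<lambda>z. c * m + z) ` {z\<in>{..<m}. P z})"
    unfolding split by (rule card_Un_disjoint) auto
  ultimately show ?case using Suc by simp
qed

lemma card_lessThan_eq_card_greaterThanAtMost:
  fixes P :: "nat \<Rightarrow> bool"
  assumes "P 0 = P m"
  shows "card {y\<in>{..<m}. P y} = card {y\<in>{0<..m}. P y}"
proof (rule bij_betw_same_card)
  show "bij_betw (\<lambda>y. if y = 0 then m else y) {y\<in>{..<m}. P y} {y\<in>{0<..m}. P y}"
    by (rule bij_betwI [where g = "\<lambda>y. if y = m then 0 else y"]) (use assms in auto)
qed

lemma card_multiples_lessThan:
  assumes "0 < k" "c dvd k"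
  shows "card {y\<in>{..<k}. c dvd y} = k div c"
proof -
  have "c > 0" using assms by (auto intro: gr0I)
  then have "{y\<in>{..<c}. c dvd y} = {0}"
    by (auto dest: dvd_imp_le)
  moreover have "card {y\<in>{..<(k div c) * c}. c dvd y} = (k div c) * card {y\<in>{..<c}. c dvd y}"
    by (rule card_periodic) simp
  ultimately show ?thesis using assms(2) by simp
qed

lemma card_coprime_lessThan:
  assumes "0 < k" "m dvd k"
  shows "card {y\<in>{..<k}. coprime y m} = (k div m) * totient m"
proof -
  have "m > 0" using assms by (auto intro: gr0I)
  then have "card {y\<in>{..<m}. coprime y m} = totient m"
    by (subst card_lessThan_eq_card_greaterThanAtMost) (simp_all add: totient_def totatives_def)
  moreover have "card {y\<in>{..<(k div m) * m}. coprime y m} = (k div m) * card {y\<in>{..<m}. coprime y m}"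
    by (rule card_periodic) (simp only: coprime_iff_gcd_eq_1 gcd_add1)
  ultimately show ?thesis using assms(2) by simp
qed

lemma card_gcd_eq_lessThan:
  assumes "0 < k" "e dvd k"
  shows "card {y\<in>{..<k}. gcd y k = e} = totient (k div e)"
  using card_gcd_eq_totient [OF assms]
  by (subst card_lessThan_eq_card_greaterThanAtMost) simp_all

lemma gcd_mult_coprime_nat:
  fixes y Q R :: nat
  assumes "coprime Q R"
  shows "gcd y (Q * R) = gcd y Q * gcd y R"
proof (rule dvd_antisym)
  have "coprime (gcd y Q) (gcd y R)"
    using assms by (meson coprime_divisors gcd_dvd2)
  then show "gcd y Q * gcd y R dvd gcd y (Q * R)"
    by (intro divides_mult) (simp_all add: dvd_mult dvd_mult2)
  have "gcd y Q * gcd y R = gcd (gcd (y * y) (y * R)) (gcd (Q * y) (Q * R))"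
    by (simp add: gcd_mult_distrib_nat [symmetric] mult.commute [of _ "gcd y R"])
  then show "gcd y (Q * R) dvd gcd y Q * gcd y R"
    by (simp add: dvd_mult dvd_mult2)
qed

lemma bij_betw_mod_pair:
  fixes m1 m2 :: nat
  assumes "coprime m1 m2" "0 < m1" "0 < m2"
  shows "bij_betw (\<lambda>x. (x mod m1, x mod m2)) {..<m1 * m2} ({..<m1} \<times> {..<m2})"
  unfolding bij_betw_def
proof
  show "inj_on (\<lambda>x. (x mod m1, x mod m2)) {..<m1 * m2}"
  proof (intro inj_onI)
    fix x y assume xy: "x \<in> {..<m1 * m2}" "y \<in> {..<m1 * m2}"
      "(x mod m1, x mod m2) = (y mod m1, y mod m2)"
    have "[x = y] (mod m1 * m2)"
      by (rule coprime_cong_mult_nat) (use xy assms in \<open>auto simp: cong_def\<close>)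
    then show "x = y" using xy by (auto intro: cong_less_modulus_unique_nat)
  qed
  show "(\<lambda>x. (x mod m1, x mod m2)) ` {..<m1 * m2} = {..<m1} \<times> {..<m2}"
  proof (intro equalityI subsetI)
    fix z assume "z \<in> {..<m1} \<times> {..<m2}"
    then obtain a b where ab: "z = (a, b)" "a < m1" "b < m2" by auto
    obtain x where x: "x < m1 * m2" "[x = a] (mod m1)" "[x = b] (mod m2)"
      using binary_chinese_remainder_unique_nat [OF assms(1), of a b] assms by auto
    then show "z \<in> (\<lambda>x. (x mod m1, x mod m2)) ` {..<m1 * m2}"
      using ab by (force simp: cong_def)
  qed (use assms in auto)
qed

lemma card_mod_pair:
  fixes m1 m2 :: nat
  assumes "coprime m1 m2" "0 < m1" "0 < m2"
  shows "card {x\<in>{..<m1 * m2}. A (x mod m1) \<and> B (x mod m2)}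
       = card {u\<in>{..<m1}. A u} * card {v\<in>{..<m2}. B v}"
proof -
  let ?f = "\<lambda>x. (x mod m1, x mod m2)"
  have bij: "bij_betw ?f {..<m1 * m2} ({..<m1} \<times> {..<m2})"
    by (rule bij_betw_mod_pair [OF assms])
  let ?S = "{x\<in>{..<m1 * m2}. A (x mod m1) \<and> B (x mod m2)}"
  have "?f ` ?S = {u\<in>{..<m1}. A u} \<times> {v\<in>{..<m2}. B v}"
  proof (intro equalityI subsetI)
    fix z assume z: "z \<in> {u\<in>{..<m1}. A u} \<times> {v\<in>{..<m2}. B v}"
    then have "z \<in> ?f ` {..<m1 * m2}" using bij_betw_imp_surj_on [OF bij] by auto
    then show "z \<in> ?f ` ?S" using z by auto
  qed (use assms in auto)
  moreover have "bij_betw ?f ?S (?f ` ?S)"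
    by (rule bij_betw_subset [OF bij]) auto
  ultimately show ?thesis
    by (simp add: bij_betw_same_card card_cartesian_product)
qed

section \<open>Closed neighbourhoods in the power graph of a cyclic group\<close>

text \<open>For \<open>e\<close> dividing \<open>k\<close>, \<open>gcd y k dvd e\<close> says that \<open>e\<close> is a power of \<open>y\<close> in
  \<open>\<int>\<^sub>k\<close>, and \<open>e dvd y\<close> that \<open>y\<close> is a power of \<open>e\<close>; so \<open>nbhd_card k e\<close> is the size
  of the closed neighbourhood of \<open>e\<close> in \<open>\<P>(C\<^sub>k)\<close>.\<close>

definition root_card :: "nat \<Rightarrow> nat \<Rightarrow> nat" where
  "root_card k e = card {y\<in>{..<k}. gcd y k dvd e}"

definition nbhd_card :: "nat \<Rightarrow> nat \<Rightarrow> nat" where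
  "nbhd_card k e = card {y\<in>{..<k}. e dvd y \<or> gcd y k dvd e}"

lemma nbhd_card_eq:
  assumes "0 < k" "e dvd k"
  shows "nbhd_card k e + totient (k div e) = k div e + root_card k e"
proof -
  let ?A = "{y\<in>{..<k}. e dvd y}" and ?B = "{y\<in>{..<k}. gcd y k dvd e}"
  have "?A \<inter> ?B = {y\<in>{..<k}. gcd y k = e}"
    using assms by (auto intro: dvd_antisym)
  moreover have "{y\<in>{..<k}. e dvd y \<or> gcd y k dvd e} = ?A \<union> ?B" by auto
  moreover have "card (?A \<union> ?B) + card (?A \<inter> ?B) = card ?A + card ?B"
    using card_Un_Int [of ?A ?B] by simp
  ultimately show ?thesis
    unfolding nbhd_card_def root_card_def
    using card_gcd_eq_lessThan [OF assms] card_multiples_lessThan [OF assms] by simp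
qed

lemma nbhd_card_le: "nbhd_card k e \<le> k"
  unfolding nbhd_card_def by (rule order.trans [OF card_mono [of "{..<k}"]]) auto

lemma nbhd_card_one [simp]: "nbhd_card k 1 = k"
  unfolding nbhd_card_def by simp

lemma root_card_self [simp]: "root_card k k = k"
  unfolding root_card_def by simp

lemma root_card_one: "0 < k \<Longrightarrow> root_card k 1 = totient k"
proof -
  assume "0 < k"
  have "(gcd y k dvd 1) = coprime y k" for y :: nat
    by (simp only: nat_dvd_1_iff_1 coprime_iff_gcd_eq_1)
  then show ?thesis unfolding root_card_def using card_coprime_lessThan [of k k] \<open>0 < k\<close> by simp
qed

lemma root_card_mult_coprime:
  fixes Q R e1 e2 :: nat
  assumes "coprime Q R" "0 < Q" "0 < R" "e1 dvd Q" "e2 dvd R"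
  shows "root_card (Q * R) (e1 * e2) = root_card Q e1 * root_card R e2"
proof -
  have "gcd y (Q * R) dvd e1 * e2 \<longleftrightarrow> gcd (y mod Q) Q dvd e1 \<and> gcd (y mod R) R dvd e2" for y
  proof -
    have c1: "coprime (gcd y Q) e2" and c2: "coprime (gcd y R) e1"
      using assms(1,4,5) by (meson coprime_divisors coprime_commute gcd_dvd2)+
    have "gcd y Q * gcd y R dvd e1 * e2 \<longleftrightarrow> gcd y Q dvd e1 \<and> gcd y R dvd e2"
    proof
      assume d: "gcd y Q * gcd y R dvd e1 * e2"
      then have "gcd y Q dvd e1 * e2" "gcd y R dvd e1 * e2"
        by (meson dvd_mult_left dvd_mult_right)+
      then show "gcd y Q dvd e1 \<and> gcd y R dvd e2"
        using c1 c2 by (simp add: coprime_dvd_mult_left_iff coprime_dvd_mult_right_iff)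
    qed (simp add: mult_dvd_mono)
    then show ?thesis
      using assms(2,3) by (simp add: gcd_mult_coprime_nat [OF assms(1)] gcd_mod_left)
  qed
  then have "root_card (Q * R) (e1 * e2)
      = card {x\<in>{..<Q * R}. gcd (x mod Q) Q dvd e1 \<and> gcd (x mod R) R dvd e2}"
    unfolding root_card_def by simp
  also have "\<dots> = root_card Q e1 * root_card R e2"
    unfolding root_card_def by (rule card_mod_pair [OF assms(1-3)])
  finally show ?thesis .
qed

text \<open>Every \<open>y\<close> coprime to \<open>k div e\<close> has \<open>gcd y k = gcd y e\<close>.\<close>

lemma root_card_ge:
  assumes "0 < k" "e dvd k"
  shows "e * totient (k div e) \<le> root_card k e"
proof -
  obtain m where k: "k = m * e" using assms(2) by (metis dvdE mult.commute)
  then have "k div e = m" "0 < m" "0 < e" using assms by auto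
  have "{y\<in>{..<k}. coprime y m} \<subseteq> {y\<in>{..<k}. gcd y k dvd e}"
    unfolding k by (auto simp: gcd_mult_right_left_cancel)
  then have "card {y\<in>{..<k}. coprime y m} \<le> root_card k e"
    unfolding root_card_def by (intro card_mono) auto
  moreover have "card {y\<in>{..<k}. coprime y m} = e * totient m"
    using card_coprime_lessThan [of k m] \<open>0 < m\<close> \<open>0 < e\<close> k by simp
  ultimately show ?thesis using \<open>k div e = m\<close> by simp
qed

lemma gcd_prime_power_dvd_iff:
  fixes q :: nat
  assumes "prime q" "g < a"
  shows "gcd y (q ^ a) dvd q ^ g \<longleftrightarrow> \<not> q ^ Suc g dvd y"
proof -
  obtain i where i: "gcd y (q ^ a) = q ^ i"
    using divides_primepow_nat [OF assms(1), of "gcd y (q ^ a)" a] by auto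
  have q: "2 \<le> q" using assms prime_ge_2_nat by blast
  have "q ^ Suc g dvd q ^ a" using assms by (intro le_imp_power_dvd) simp
  then have "q ^ Suc g dvd y \<longleftrightarrow> q ^ Suc g dvd gcd y (q ^ a)"
    using gcd_greatest_iff by blast
  moreover have "q ^ Suc g dvd q ^ i \<longleftrightarrow> Suc g \<le> i"
    by (rule dvd_power_iff_le [OF q])
  moreover have "q ^ i dvd q ^ g \<longleftrightarrow> i \<le> g"
    by (rule dvd_power_iff_le [OF q])
  ultimately show ?thesis using i by auto
qed

lemma root_card_prime_power:
  fixes q :: nat
  assumes "prime q" "g < a"
  shows "root_card (q ^ a) (q ^ g) + q ^ (a - Suc g) = q ^ a"
proof -
  have q: "q > 0" using assms prime_gt_0_nat by blast
  let ?S = "{y\<in>{..<q ^ a}. q ^ Suc g dvd y}"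
  have "q ^ Suc g dvd q ^ a" using assms by (intro le_imp_power_dvd) simp
  then have "card ?S = q ^ a div q ^ Suc g"
    using q by (intro card_multiples_lessThan) simp_all
  also have "\<dots> = q ^ (a - Suc g)" using q assms by (simp add: power_diff)
  finally have "card ?S = q ^ (a - Suc g)" .
  moreover have "root_card (q ^ a) (q ^ g) = card ({..<q ^ a} - ?S)"
    unfolding root_card_def using gcd_prime_power_dvd_iff [OF assms] by (intro arg_cong [of _ _ card]) auto
  moreover have "card ({..<q ^ a} - ?S) = q ^ a - card ?S"
    by (subst card_Diff_subset) auto
  moreover have "q ^ (a - Suc g) \<le> q ^ a" using q by (simp add: power_increasing)
  ultimately show ?thesis by simp
qed

lemma cyc_power_iff:
  assumes "0 < n" "b < n"
  shows "cyc_power n a b \<longleftrightarrow> gcd a n dvd b"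
proof
  assume "cyc_power n a b"
  then obtain k :: int where "int b = (k * int a) mod int n" unfolding cyc_power_def by blast
  then have "int b = k * int a - int n * ((k * int a) div int n)"
    by (simp add: minus_div_mult_eq_mod [symmetric] mult.commute)
  moreover have "gcd (int a) (int n) dvd k * int a - int n * ((k * int a) div int n)"
    by (intro dvd_diff dvd_mult dvd_mult2) simp_all
  ultimately have "int (gcd a n) dvd int b" by (simp add: gcd_int_int_eq)
  then show "gcd a n dvd b" by simp
next
  assume "gcd a n dvd b"
  then obtain c where c: "b = gcd a n * c" by (rule dvdE)
  obtain u v :: int where uv: "u * int a + v * int n = int (gcd a n)"
    using bezout_int [of "int a" "int n"] by (auto simp: gcd_int_int_eq)
  have "int c * (u * int a + v * int n) = int c * u * int a + (int c * v) * int n"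
    by (simp add: algebra_simps)
  then have "(int c * u * int a) mod int n = (int c * (u * int a + v * int n)) mod int n"
    by simp
  also have "\<dots> = int b mod int n" using uv c by (simp add: mult.commute)
  also have "\<dots> = int b" using assms by simp
  finally show "cyc_power n a b" unfolding cyc_power_def by metis
qed

text \<open>\<open>a\<close> and \<open>gcd a n\<close> are powers of each other, so they have the same closed
  neighbourhood.\<close>

lemma pg_deg_eq_nbhd_card:
  assumes "0 < n" "a < n"
  shows "pg_deg n a + 1 = nbhd_card n (gcd a n)"
proof -
  let ?N = "{y\<in>{..<n}. gcd a n dvd y \<or> gcd y n dvd gcd a n}"
  have "pg_adj n a b \<longleftrightarrow> b \<in> ?N - {a}" for b
  proof (cases "b < n")
    case True
    then show ?thesis
      unfolding pg_adj_def using assms cyc_power_iff [OF assms(1) True, of a]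
        cyc_power_iff [OF assms, of b] by (auto simp: gcd_greatest_iff)
  qed (auto simp: pg_adj_def)
  then have "{b\<in>{0..<n}. pg_adj n a b} = ?N - {a}" by auto
  moreover have "card (?N - {a}) + 1 = card ?N"
    using assms by (subst card_Diff_singleton) (auto intro!: Suc_pred card_gt_0_iff [THEN iffD2])
  ultimately show ?thesis unfolding pg_deg_def nbhd_card_def by simp
qed

section \<open>Real inequalities\<close>

lemma prod_superset_le:
  fixes f :: "'a \<Rightarrow> real"
  assumes "finite B" "A \<subseteq> B" "\<And>x. x \<in> B \<Longrightarrow> 0 \<le> f x \<and> f x \<le> 1"
  shows "prod f B \<le> prod f A"
proof -
  have "prod f B = prod f A * prod f (B - A)"
    using assms by (metis prod.subset_diff mult.commute)
  moreover have "prod f (B - A) \<le> 1" using assms by (intro prod_le_1) auto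
  moreover have "0 \<le> prod f A" using assms by (intro prod_nonneg) auto
  ultimately show ?thesis by (simp add: mult_left_le)
qed

text \<open>With \<open>a = p\<^sub>j < b = p\<^sub>t\<close>, \<open>P = a\<^sup>\<alpha>\<^sub>j\<^sup>-\<^sup>1\<close>, \<open>Q = b\<^sup>\<alpha>\<^sub>t\<^sup>-\<^sup>1\<close>, \<open>M\<close> the product
  of the remaining prime powers of \<open>n\<close> and \<open>\<mu> = \<phi>(M)\<close>, the expression in the following
  four lemmas is \<open>deg (p\<^sub>j\<^sup>\<alpha>\<^sub>j) - deg (p\<^sub>t\<^sup>\<alpha>\<^sub>t)\<close>.\<close>

lemma exchange_nonneg_of_le:
  fixes a b P Q M \<mu> :: real
  assumes "0 \<le> \<mu>" "\<mu> \<le> M" "1 \<le> P" "1 \<le> Q" "a + 1 \<le> b" "a * P \<le> b * Q"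
  shows "0 \<le> (M - \<mu>) * (b * Q - a * P) + \<mu> * (P * Q * (b - a) + Q - P)"
proof -
  have "1 * 1 \<le> Q * (b - a)" using assms by (intro mult_mono) auto
  then have "P * 1 \<le> P * (Q * (b - a))" using assms by (intro mult_left_mono) auto
  then have "0 \<le> P * Q * (b - a) + Q - P" using assms(4) by (simp add: mult.assoc)
  then show ?thesis using assms by (intro add_nonneg_nonneg mult_nonneg_nonneg) auto
qed

lemma exchange_nonneg_unit:
  fixes a b P Q M \<mu> :: real
  assumes "0 \<le> \<mu>" "\<mu> \<le> M" "0 \<le> P" "0 \<le> b" "Q = 1" "a * M \<le> (b - 1) * \<mu>"
  shows "0 \<le> (M - \<mu>) * (b * Q - a * P) + \<mu> * (P * Q * (b - a) + Q - P)"
proof -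
  have "(M - \<mu>) * (a * P - b) \<le> (M - \<mu>) * (a * P)"
    using assms by (intro mult_left_mono) auto
  also have "\<dots> = (a * (M - \<mu>)) * P" by simp
  also have "\<dots> \<le> ((b - 1 - a) * \<mu>) * P"
    using assms by (intro mult_right_mono) (simp_all add: algebra_simps)
  finally have "(M - \<mu>) * (a * P - b) \<le> (b - 1 - a) * \<mu> * P" .
  moreover have "\<mu> * (P * (b - a) + 1 - P) - (b - 1 - a) * \<mu> * P = \<mu>"
    by (simp add: algebra_simps)
  ultimately show ?thesis using assms by (simp add: algebra_simps)
qed

lemma exchange_nonneg_half:
  fixes a b P Q M \<mu> :: real
  assumes "0 \<le> \<mu>" "M \<le> 2 * \<mu>" "1 \<le> P" "b \<le> Q" "a + 1 \<le> b" "0 \<le> a" "b * Q < a * P"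
  shows "0 \<le> (M - \<mu>) * (b * Q - a * P) + \<mu> * (P * Q * (b - a) + Q - P)"
proof -
  have "(M - \<mu>) * (a * P - b * Q) \<le> \<mu> * (a * P - b * Q)"
    using assms by (intro mult_right_mono) auto
  moreover have "a * P - b * Q \<le> P * Q * (b - a) + Q - P"
  proof -
    have "b * 1 \<le> Q * (b - a)" using assms by (intro mult_mono) auto
    then have "P * b \<le> P * (Q * (b - a))" using assms by (intro mult_left_mono) auto
    moreover have "P * (a + 1) \<le> P * b" using assms by (intro mult_left_mono) auto
    moreover have "0 \<le> b * Q" "0 \<le> Q" using assms by simp_all
    ultimately show ?thesis by (simp add: algebra_simps)
  qed
  then have "\<mu> * (a * P - b * Q) \<le> \<mu> * (P * Q * (b - a) + Q - P)"
    using assms by (intro mult_left_mono) auto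
  with \<open>(M - \<mu>) * (a * P - b * Q) \<le> \<mu> * (a * P - b * Q)\<close> show ?thesis
    by (simp add: algebra_simps)
qed

lemma exchange_nonneg_chain:
  fixes a b P Q M \<mu> r :: real
  assumes "0 \<le> \<mu>" "2 * M \<le> (r + 1) * \<mu>" "1 \<le> P" "b \<le> Q" "2 \<le> r" "2 \<le> a"
    "r * (a - 1) \<le> b - 1" "b * Q < a * P"
  shows "0 \<le> (M - \<mu>) * (b * Q - a * P) + \<mu> * (P * Q * (b - a) + Q - P)"
proof -
  define Z where "Z = P * Q * (b - a) + Q - P"
  have ab: "a + 1 \<le> b"
  proof -
    have "2 * (a - 1) \<le> r * (a - 1)" using assms by (intro mult_right_mono) auto
    then show ?thesis using assms by simp
  qed
  have "(r - 1) * (a / 2) \<le> (r - 1) * (a - 1)" using assms by (intro mult_left_mono) auto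
  then have gap: "(r - 1) * a / 2 \<le> b - a" using assms by (simp add: algebra_simps)
  have ZP: "P * (b * (b - a) - 1) \<le> Z"
  proof -
    have "b * (b - a) \<le> Q * (b - a)" using assms ab by (intro mult_right_mono) auto
    then have "P * (b * (b - a)) \<le> P * (Q * (b - a))" using assms by (intro mult_left_mono) auto
    moreover have "0 \<le> Q" using assms ab by simp
    ultimately show ?thesis unfolding Z_def by (simp add: algebra_simps)
  qed
  have "(r - 1) * a / 2 \<le> b * (b - a) - 1"
  proof -
    have "3 * (b - a) \<le> b * (b - a)" using assms ab by (intro mult_right_mono) auto
    moreover have "1 * 2 \<le> (r - 1) * a" using assms by (intro mult_mono) auto
    ultimately show ?thesis using gap by argo
  qed
  then have "P * ((r - 1) * a / 2) \<le> P * (b * (b - a) - 1)"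
    using assms by (intro mult_left_mono) auto
  moreover have "(r - 1) * (a * P) = 2 * (P * ((r - 1) * a / 2))" by (simp add: algebra_simps)
  ultimately have Z: "(r - 1) * (a * P) \<le> 2 * Z" using ZP by linarith
  have "(2 * (M - \<mu>)) * (a * P - b * Q) \<le> ((r - 1) * \<mu>) * (a * P - b * Q)"
    using assms by (intro mult_right_mono) (simp_all add: algebra_simps)
  then have "2 * ((M - \<mu>) * (a * P - b * Q)) \<le> ((r - 1) * \<mu>) * (a * P - b * Q)"
    by (simp only: mult.assoc)
  also have "\<dots> \<le> ((r - 1) * \<mu>) * (a * P)"
    using assms ab by (intro mult_left_mono) auto
  also have "\<dots> \<le> \<mu> * (2 * Z)"
    using mult_left_mono [OF Z assms(1)] by (simp add: algebra_simps)
  finally show ?thesis unfolding Z_def by (simp add: algebra_simps)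
qed

section \<open>The prime factorization of \<open>n\<close>\<close>

locale ordered_factorization =
  fixes n r :: nat and p \<alpha> :: "nat \<Rightarrow> nat"
  assumes r_ge_2: "r \<ge> 2"
    and primes: "\<forall>i\<in>{1..r}. prime (p i)"
    and p_incr: "\<forall>i\<in>{1..<r}. p i < p (i + 1)"
    and exps_pos: "\<forall>i\<in>{1..r}. \<alpha> i \<ge> 1"
    and n_eq: "n = (\<Prod>i=1..r. p i ^ \<alpha> i)"
begin

definition pp :: "nat \<Rightarrow> nat" where
  "pp i = p i ^ \<alpha> i"

definition pp_prod :: "nat set \<Rightarrow> nat" where
  "pp_prod I = (\<Prod>i\<in>I. pp i)"

definition cofactor :: "nat \<Rightarrow> nat" where
  "cofactor k = pp_prod ({1..r} - {k})"

text \<open>This is \<open>\<phi>(m)/m\<close> for every \<open>m\<close> whose set of prime factors is \<open>p ` I\<close>.\<close>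

definition totient_density :: "nat set \<Rightarrow> real" where
  "totient_density I = (\<Prod>i\<in>I. 1 - 1 / real (p i))"

abbreviation half_totient_cond :: bool where
  "half_totient_cond \<equiv> 2 * totient (\<Prod>i=1..r. p i) \<ge> (\<Prod>i=1..r. p i)"

abbreviation totient_chain_cond :: bool where
  "totient_chain_cond \<equiv> \<forall>i\<in>{1..<r}. totient (p (i + 1)) \<ge> r * totient (p i)"

lemma prime_p: "i \<in> {1..r} \<Longrightarrow> prime (p i)"
  using primes by auto

lemma p_gt_1: "i \<in> {1..r} \<Longrightarrow> p i > 1"
  using prime_p prime_gt_1_nat by blast

lemma p_less: "i \<in> {1..r} \<Longrightarrow> j \<in> {1..r} \<Longrightarrow> i < j \<Longrightarrow> p i < p j"
proof (induction j)
  case (Suc j)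
  show ?case
  proof (cases "i = j")
    case False
    then have "p i < p j" using Suc by auto
    also have "p j < p (Suc j)" using p_incr Suc.prems False by auto
    finally show ?thesis .
  qed (use p_incr Suc.prems in auto)
qed simp

lemma inj_on_p: "inj_on p {1..r}"
  unfolding inj_on_def using p_less by (metis linorder_neqE_nat less_irrefl)

lemma p_ge: "i \<in> {1..r} \<Longrightarrow> p i \<ge> i + 1"
proof (induction i)
  case (Suc i)
  show ?case
  proof (cases "i = 0")
    case False
    then have "p i \<ge> i + 1" using Suc by auto
    moreover have "p i < p (Suc i)" using p_incr Suc.prems False by auto
    ultimately show ?thesis by simp
  qed (use p_gt_1 [of 1] Suc.prems in auto)
qed simp

lemma real_p_minus_1: "i \<in> {1..r} \<Longrightarrow> real (p i - 1) = real (p i) - 1"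
  using p_gt_1 [of i] by (simp add: of_nat_diff)

lemma pp_pos: "i \<in> {1..r} \<Longrightarrow> pp i > 0"
  unfolding pp_def using p_gt_1 [of i] by simp

lemma alpha_pos: "i \<in> {1..r} \<Longrightarrow> \<alpha> i > 0"
  using exps_pos by fastforce

lemma pp_gt_1:
  assumes "i \<in> {1..r}"
  shows "pp i > 1"
  unfolding pp_def by (rule one_less_power) (use p_gt_1 [OF assms] alpha_pos [OF assms] in auto)

lemma prime_factors_pp: "i \<in> {1..r} \<Longrightarrow> prime_factors (pp i) = {p i}"
  unfolding pp_def using prime_p [of i] alpha_pos [of i]
  by (simp add: prime_factors_power prime_prime_factors)

lemma pp_prod_pos: "I \<subseteq> {1..r} \<Longrightarrow> pp_prod I > 0"
  unfolding pp_prod_def using pp_pos by (intro prod_pos) auto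

lemma n_eq_pp_prod: "n = pp_prod {1..r}"
  unfolding n_eq pp_prod_def pp_def by simp

lemma n_pos: "n > 0"
  using pp_prod_pos [of "{1..r}"] n_eq_pp_prod by simp

lemma coprime_pp_pp_prod:
  assumes "k \<in> {1..r}" "I \<subseteq> {1..r}" "k \<notin> I"
  shows "coprime (pp k) (pp_prod I)"
  unfolding pp_prod_def
proof (rule prod_coprime_right)
  fix i assume i: "i \<in> I"
  then have "p k \<noteq> p i" using inj_on_p assms unfolding inj_on_def by blast
  then have "coprime (p k) (p i)" using prime_p assms i by (intro primes_coprime) auto
  then show "coprime (pp k) (pp i)" unfolding pp_def by simp
qed

lemma prime_factors_pp_prod:
  assumes "I \<subseteq> {1..r}"
  shows "prime_factors (pp_prod I) = p ` I"
proof -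
  have "finite I" using assms finite_subset by blast
  then have "prime_factors (pp_prod I) = \<Union>((prime_factors \<circ> pp) ` I)"
    unfolding pp_prod_def using pp_pos assms by (intro prime_factors_prod) force+
  also have "\<dots> = \<Union>((\<lambda>i. {p i}) ` I)"
    using assms prime_factors_pp by (intro arg_cong [where f = Union] image_cong) auto
  finally show ?thesis by auto
qed

lemma prime_dvd_n_obtain:
  assumes "prime q" "q dvd n"
  obtains k where "k \<in> {1..r}" "q = p k"
proof -
  have "q \<in> prime_factors n" using assms n_pos by (auto simp: in_prime_factors_iff)
  then show thesis using that prime_factors_pp_prod [of "{1..r}"] n_eq_pp_prod by auto
qed

lemma n_eq_pp_cofactor:
  assumes "k \<in> {1..r}"
  shows "n = pp k * cofactor k"
  unfolding n_eq_pp_prod cofactor_def pp_prod_def by (rule prod.remove) (use assms in auto)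

lemma cofactor_pos: "cofactor k > 0"
  unfolding cofactor_def by (rule pp_prod_pos) auto

lemma coprime_pp_cofactor: "k \<in> {1..r} \<Longrightarrow> coprime (pp k) (cofactor k)"
  unfolding cofactor_def by (rule coprime_pp_pp_prod) auto

lemma p_not_dvd_cofactor:
  assumes "k \<in> {1..r}"
  shows "\<not> p k dvd cofactor k"
proof
  assume "p k dvd cofactor k"
  then have "p k \<in> prime_factors (cofactor k)"
    using prime_p [OF assms] cofactor_pos by (auto simp: in_prime_factors_iff)
  then have "p k \<in> p ` ({1..r} - {k})"
    using prime_factors_pp_prod [of "{1..r} - {k}"] unfolding cofactor_def by simp
  then obtain i where "i \<in> {1..r} - {k}" "p k = p i" by blast
  then show False using inj_onD [OF inj_on_p, of k i] assms by blast
qed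

lemma cofactor_eq_pp_mult:
  assumes "j \<in> {1..r}" "t \<in> {1..r}" "j \<noteq> t"
  shows "cofactor j = pp t * pp_prod ({1..r} - {j, t})"
    and "coprime (pp t) (pp_prod ({1..r} - {j, t}))"
proof -
  have "{1..r} - {j} = insert t ({1..r} - {j, t})" using assms by auto
  then show "cofactor j = pp t * pp_prod ({1..r} - {j, t})"
    unfolding cofactor_def pp_prod_def by simp
  show "coprime (pp t) (pp_prod ({1..r} - {j, t}))"
    by (rule coprime_pp_pp_prod) (use assms in auto)
qed

lemma pp_dvd_n: "s \<in> {1..r} \<Longrightarrow> pp s dvd n"
  using n_eq_pp_cofactor by simp

lemma pp_less_n:
  assumes s: "s \<in> {1..r}"
  shows "pp s < n"
proof -
  obtain i where i: "i \<in> {1..r}" "i \<noteq> s"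
  proof (cases "s = 1")
    case True
    then show ?thesis using that [of 2] r_ge_2 by auto
  next
    case False
    then show ?thesis using that [of 1] r_ge_2 s by auto
  qed
  have "pp i * 1 \<le> pp i * pp_prod ({1..r} - {s, i})"
    using pp_prod_pos [of "{1..r} - {s, i}"] by (intro mult_le_mono) auto
  then have "pp i \<le> cofactor s"
    using cofactor_eq_pp_mult (1) [OF s i(1)] i(2) by simp
  then have "cofactor s > 1" using pp_gt_1 [OF i(1)] by simp
  then show ?thesis using n_eq_pp_cofactor [OF s] pp_pos [OF s] by simp
qed

lemma one_minus_inverse_p_nonneg: "i \<in> {1..r} \<Longrightarrow> 0 \<le> 1 - 1 / real (p i)"
  using p_gt_1 [of i] by simp

lemma totient_ge_density:
  assumes "m > 0" "prime_factors m \<subseteq> p ` I" "I \<subseteq> {1..r}"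
  shows "real m * totient_density I \<le> real (totient m)"
proof -
  have "totient_density I = (\<Prod>q\<in>p ` I. 1 - 1 / real q)"
    unfolding totient_density_def using inj_on_p assms
    by (subst prod.reindex) (auto intro: inj_on_subset)
  also have "\<dots> \<le> (\<Prod>q\<in>prime_factors m. 1 - 1 / real q)"
  proof (rule prod_superset_le)
    show "finite (p ` I)" using assms finite_subset by blast
    fix x assume "x \<in> p ` I"
    then have "x > 1" using p_gt_1 assms by auto
    then show "0 \<le> 1 - 1 / real x \<and> 1 - 1 / real x \<le> 1" by simp
  qed (rule assms(2))
  finally show ?thesis using totient_formula2 [of m] by (simp add: mult_left_mono)
qed

lemma totient_density_interval_ge:
  assumes "1 \<le> a" "a \<le> b" "b \<le> r"
  shows "real a / real (b + 1) \<le> totient_density {a..b}"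
  using assms(2,3)
proof (induction b rule: dec_induct)
  case base
  have "real (a + 1) \<le> real (p a)" using p_ge [of a] assms by simp
  then have "1 / real (p a) \<le> 1 / real (a + 1)" by (intro divide_left_mono) auto
  then show ?case unfolding totient_density_def by (simp add: field_simps)
next
  case (step b)
  have "real (Suc b + 1) \<le> real (p (Suc b))" using p_ge [of "Suc b"] step assms by simp
  then have "1 / real (p (Suc b)) \<le> 1 / real (Suc b + 1)" by (intro divide_left_mono) auto
  then have f: "real (Suc b) / real (Suc b + 1) \<le> 1 - 1 / real (p (Suc b))"
    by (simp add: field_simps)
  have "real a / real (Suc b + 1) = (real (Suc b) / real (Suc b + 1)) * (real a / real (b + 1))"
    by (simp add: field_simps del: of_nat_Suc)
  also have "\<dots> \<le> (1 - 1 / real (p (Suc b))) * totient_density {a..b}"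
    using step f one_minus_inverse_p_nonneg [of "Suc b"] assms by (intro mult_mono) auto
  also have "\<dots> = totient_density {a..Suc b}"
    unfolding totient_density_def using step by (simp add: atLeastAtMostSuc_conv)
  finally show ?case .
qed

text \<open>The factors telescope: \<open>1 - 1 / p i \<ge> p (i - 1) / p i\<close>.\<close>

lemma totient_density_ge_ratio:
  assumes "1 \<le> k" "k \<le> r"
  shows "real (p 1) / real (p k) \<le> totient_density {2..k}"
  using assms
proof (induction k rule: dec_induct)
  case base
  then show ?case using p_gt_1 [of 1] by (simp add: totient_density_def)
next
  case (step k)
  have pk: "0 < real (p k)" using p_gt_1 [of k] step by simp
  have "p k < p (Suc k)" using p_less [of k "Suc k"] step by simp
  then have f: "real (p k) / real (p (Suc k)) \<le> 1 - 1 / real (p (Suc k))"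
    using pk by (simp add: field_simps)
  have "real (p 1) / real (p (Suc k)) = (real (p k) / real (p (Suc k))) * (real (p 1) / real (p k))"
    using pk by (simp add: field_simps)
  also have "\<dots> \<le> (1 - 1 / real (p (Suc k))) * totient_density {2..k}"
    using step f pk one_minus_inverse_p_nonneg [of "Suc k"] by (intro mult_mono) auto
  also have "\<dots> = totient_density {2..Suc k}"
    unfolding totient_density_def using step by (simp add: atLeastAtMostSuc_conv)
  finally show ?case .
qed

lemma totient_density_ge_half:
  assumes "half_totient_cond"
  shows "1 / 2 \<le> totient_density {1..r}"
proof -
  define R where "R = (\<Prod>i=1..r. p i)"
  have "R > 0" unfolding R_def using p_gt_1 by (intro prod_pos) (auto intro: less_trans [OF zero_less_one])
  have "prime_factors R = p ` {1..r}"
  proof -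
    have "prime_factors R = \<Union>((prime_factors \<circ> p) ` {1..r})"
      unfolding R_def using p_gt_1 by (intro prime_factors_prod) force+
    also have "\<dots> = p ` {1..r}" using prime_p by (auto simp: prime_prime_factors)
    finally show ?thesis .
  qed
  then have "real (totient R) = real R * totient_density {1..r}"
    using totient_formula2 [of R] inj_on_p by (simp add: totient_density_def prod.reindex)
  moreover have "real R \<le> 2 * real (totient R)"
    using assms unfolding R_def by (metis of_nat_le_iff of_nat_mult of_nat_numeral)
  ultimately show ?thesis using \<open>R > 0\<close> by simp
qed

lemma totient_chain_cond_iterate:
  assumes "totient_chain_cond" "k \<in> {1..r}" "j \<in> {1..r}" "k < j"
  shows "r * (p k - 1) \<le> p j - 1"
  using assms(3,4)
proof (induction j)
  case (Suc j)
  have step: "r * (p i - 1) \<le> p (Suc i) - 1" if "i \<in> {1..<r}" for i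
  proof -
    have "r * totient (p i) \<le> totient (p (i + 1))" using assms(1) that by blast
    then show ?thesis using that prime_p [of i] prime_p [of "Suc i"] by (simp add: totient_prime)
  qed
  show ?case
  proof (cases "k = j")
    case False
    then have "r * (p k - 1) \<le> p j - 1" using Suc assms by auto
    also have "\<dots> \<le> r * (p j - 1)" using r_ge_2 by simp
    also have "\<dots> \<le> p (Suc j) - 1" using step [of j] Suc.prems False assms by auto
    finally show ?thesis .
  qed (use step [of j] Suc.prems assms in auto)
qed simp

section \<open>Every degree is attained or exceeded at a full prime power\<close>

lemma nbhd_card_split:
  assumes k: "k \<in> {1..r}" and g: "g \<le> \<alpha> k" and e: "e dvd cofactor k"
  shows "real (nbhd_card n (p k ^ g * e)) =
           real (p k ^ (\<alpha> k - g)) * real (cofactor k div e)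
         + real (root_card (pp k) (p k ^ g)) * real (root_card (cofactor k) e)
         - real (totient (p k ^ (\<alpha> k - g))) * real (totient (cofactor k div e))"
proof -
  let ?q = "p k" and ?Q = "pp k" and ?R = "cofactor k"
  have n: "n = ?Q * ?R" by (rule n_eq_pp_cofactor [OF k])
  have cop: "coprime ?Q ?R" by (rule coprime_pp_cofactor [OF k])
  have gd: "?q ^ g dvd ?Q" unfolding pp_def using g by (rule le_imp_power_dvd)
  have "?q ^ g * e dvd n" unfolding n using gd e by (rule mult_dvd_mono)
  then have eq: "nbhd_card n (?q ^ g * e) + totient (n div (?q ^ g * e))
      = n div (?q ^ g * e) + root_card n (?q ^ g * e)"
    by (rule nbhd_card_eq [OF n_pos])
  have "n div (?q ^ g * e) = (?Q div ?q ^ g) * (?R div e)"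
    unfolding n using gd e by (rule div_mult_div_if_dvd [symmetric])
  also have "?Q div ?q ^ g = ?q ^ (\<alpha> k - g)"
    unfolding pp_def using g p_gt_1 [OF k] by (simp add: power_diff)
  finally have div: "n div (?q ^ g * e) = ?q ^ (\<alpha> k - g) * (?R div e)" .
  have "coprime (?q ^ (\<alpha> k - g)) (?R div e)"
  proof (rule coprime_divisors [OF _ _ cop])
    show "?q ^ (\<alpha> k - g) dvd ?Q" unfolding pp_def by (rule le_imp_power_dvd) simp
    show "?R div e dvd ?R" using e by (metis dvd_div_mult_self dvd_triv_left)
  qed
  then have tot: "totient (?q ^ (\<alpha> k - g) * (?R div e)) = totient (?q ^ (\<alpha> k - g)) * totient (?R div e)"
    by (rule totient_mult_coprime)
  have root: "root_card n (?q ^ g * e) = root_card ?Q (?q ^ g) * root_card ?R e"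
    unfolding n by (rule root_card_mult_coprime [OF cop pp_pos [OF k] cofactor_pos gd e])
  show ?thesis
    using arg_cong [OF eq, of real] unfolding div tot root by simp
qed

lemma root_card_pp_prime_power:
  assumes k: "k \<in> {1..r}" and g: "g < \<alpha> k"
  shows "real (root_card (pp k) (p k ^ g)) = real (p k) ^ \<alpha> k - real (p k) ^ (\<alpha> k - Suc g)"
  using arg_cong [OF root_card_prime_power [OF prime_p [OF k] g], of real]
  unfolding pp_def by simp

lemma totient_p_power:
  assumes k: "k \<in> {1..r}" and x: "x \<ge> 1"
  shows "real (totient (p k ^ x)) = real (p k) ^ (x - 1) * (real (p k) - 1)"
  using prime_p [OF k] x real_p_minus_1 [OF k] by (simp add: totient_prime_power)

lemma nbhd_card_mult_prime_power:
  assumes k: "k \<in> {1..r}" and g: "g < \<alpha> k" and e: "e dvd cofactor k"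
  shows "real (nbhd_card n (p k ^ g * e)) =
           real (p k) * real (p k) ^ (\<alpha> k - Suc g) * real (cofactor k div e)
         + (real (p k) ^ \<alpha> k - real (p k) ^ (\<alpha> k - Suc g)) * real (root_card (cofactor k) e)
         - real (p k) ^ (\<alpha> k - Suc g) * (real (p k) - 1) * real (totient (cofactor k div e))"
proof -
  have "\<alpha> k - g = Suc (\<alpha> k - Suc g)" using g by simp
  then show ?thesis
    using nbhd_card_split [OF k _ e, of g] root_card_pp_prime_power [OF k g]
      totient_p_power [OF k, of "\<alpha> k - g"] g
    by (simp del: power_Suc add: power_Suc [symmetric])
qed

lemma nbhd_card_mult_pp:
  assumes k: "k \<in> {1..r}" and e: "e dvd cofactor k"
  shows "real (nbhd_card n (pp k * e)) = real (cofactor k div e)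
           + real (pp k) * real (root_card (cofactor k) e) - real (totient (cofactor k div e))"
  using nbhd_card_split [OF k order_refl e] unfolding pp_def by simp

lemma nbhd_card_pp_le_prime_power:
  assumes k: "k \<in> {1..r}" and g: "1 \<le> g" "g \<le> \<alpha> k"
  shows "nbhd_card n (pp k) \<le> nbhd_card n (p k ^ g)"
proof (cases "g = \<alpha> k")
  case False
  define q R f y where "q = real (p k)" and "R = real (cofactor k)"
    and "f = real (totient (cofactor k))" and "y = q ^ (\<alpha> k - Suc g)"
  have root: "root_card (cofactor k) 1 = totient (cofactor k)"
    by (rule root_card_one [OF cofactor_pos])
  have "real (nbhd_card n (p k ^ g)) = q * y * R + (q ^ \<alpha> k - y) * f - y * (q - 1) * f"
    using nbhd_card_mult_prime_power [OF k _ one_dvd, of g] False g root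
    unfolding q_def R_def f_def y_def by simp
  moreover have "real (nbhd_card n (pp k)) = R + q ^ \<alpha> k * f - f"
    using nbhd_card_mult_pp [OF k one_dvd] root unfolding q_def R_def f_def pp_def by simp
  ultimately have "real (nbhd_card n (p k ^ g)) - real (nbhd_card n (pp k)) = (q * y - 1) * (R - f)"
    by (simp add: algebra_simps)
  moreover have "1 \<le> q * y"
    unfolding q_def y_def using p_gt_1 [OF k] by (simp flip: power_Suc add: one_le_power)
  moreover have "f \<le> R" unfolding f_def R_def by (simp add: totient_le)
  ultimately have "0 \<le> real (nbhd_card n (p k ^ g)) - real (nbhd_card n (pp k))" by simp
  then show ?thesis by simp
qed (simp add: pp_def)

text \<open>The increase of the closed neighbourhood is a nonnegative multiple of the slack in the
  last hypothesis.\<close>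

lemma nbhd_card_le_mult_prime_power:
  assumes k: "k \<in> {1..r}" and g: "1 \<le> g" "g \<le> \<alpha> k" and e: "e dvd cofactor k"
    and slack: "real (p k) * real (cofactor k div e)
      \<le> real (root_card (cofactor k) e) + (real (p k) - 1) * real (totient (cofactor k div e))"
  shows "nbhd_card n e \<le> nbhd_card n (p k ^ g * e)"
proof -
  define q m G f Y where "q = real (p k)" and "m = real (cofactor k div e)"
    and "G = real (root_card (cofactor k) e)" and "f = real (totient (cofactor k div e))"
    and "Y = q ^ (\<alpha> k - 1)"
  have qY: "q ^ \<alpha> k = q * Y" unfolding Y_def using g by (simp flip: power_Suc)
  have K: "0 \<le> G - q * m + (q - 1) * f" using slack unfolding q_def m_def G_def f_def by simp
  have "real (nbhd_card n (p k ^ 0 * e)) = q * Y * m + (q ^ \<alpha> k - Y) * G - Y * (q - 1) * f"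
    using nbhd_card_mult_prime_power [OF k _ e, of 0] g
    unfolding q_def m_def G_def f_def Y_def by simp
  then have D0: "real (nbhd_card n e) = q * Y * m + (q * Y - Y) * G - Y * (q - 1) * f"
    by (simp add: qY)
  show ?thesis
  proof (cases "g = \<alpha> k")
    case True
    have "real (nbhd_card n (p k ^ g * e)) = m + q * Y * G - f"
      using nbhd_card_mult_pp [OF k e] True qY unfolding q_def m_def G_def f_def pp_def by simp
    then have "real (nbhd_card n (p k ^ g * e)) - real (nbhd_card n e) = (m - f) + Y * (G - q * m + (q - 1) * f)"
      unfolding D0 by (simp add: algebra_simps)
    moreover have "f \<le> m" unfolding f_def m_def by (simp add: totient_le)
    moreover have "0 \<le> Y" unfolding Y_def q_def by simp
    ultimately have "0 \<le> real (nbhd_card n (p k ^ g * e)) - real (nbhd_card n e)" using K by simp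
    then show ?thesis by simp
  next
    case False
    define y where "y = q ^ (\<alpha> k - Suc g)"
    have "real (nbhd_card n (p k ^ g * e)) = q * y * m + (q * Y - y) * G - y * (q - 1) * f"
      using nbhd_card_mult_prime_power [OF k _ e, of g] False g qY
      unfolding q_def m_def G_def f_def y_def by simp
    then have "real (nbhd_card n (p k ^ g * e)) - real (nbhd_card n e) = (Y - y) * (G - q * m + (q - 1) * f)"
      unfolding D0 by (simp add: algebra_simps)
    moreover have "y \<le> Y"
      unfolding y_def Y_def q_def using p_gt_1 [OF k] g by (intro power_increasing) auto
    ultimately have "0 \<le> real (nbhd_card n (p k ^ g * e)) - real (nbhd_card n e)" using K by simp
    then show ?thesis by simp
  qed
qed

lemma cofactor_slack:
  assumes cond: "half_totient_cond \<or> totient_chain_cond"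
    and k: "k \<in> {1..r}" and j: "j \<in> {1..r}" "k < j"
    and e: "e dvd cofactor k" "p j dvd e"
  shows "real (p k) * real (cofactor k div e)
      \<le> real (root_card (cofactor k) e) + (real (p k) - 1) * real (totient (cofactor k div e))"
proof -
  define q m G f X where "q = real (p k)" and "m = real (cofactor k div e)"
    and "G = real (root_card (cofactor k) e)" and "f = real (totient (cofactor k div e))"
    and "X = totient_density ({1..r} - {k})"
  have q: "1 < q" unfolding q_def using p_gt_1 [OF k] by simp
  have e0: "0 < e" using e(1) cofactor_pos [of k] by (metis dvd_0_left_iff neq0_conv)
  have "e * totient (cofactor k div e) \<le> root_card (cofactor k) e"
    by (rule root_card_ge [OF cofactor_pos e(1)])
  then have G: "real e * f \<le> G" unfolding G_def f_def by (metis of_nat_le_iff of_nat_mult)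
  have pj: "real (p j) \<le> real e" using dvd_imp_le [OF e(2) e0] by simp
  have "cofactor k div e dvd cofactor k" using e by (metis dvd_div_mult_self dvd_triv_left)
  then have "prime_factors (cofactor k div e) \<subseteq> prime_factors (cofactor k)"
    using cofactor_pos [of k] by (intro dvd_prime_factors) auto
  then have "prime_factors (cofactor k div e) \<subseteq> p ` ({1..r} - {k})"
    using prime_factors_pp_prod [of "{1..r} - {k}"] unfolding cofactor_def by simp
  moreover have "0 < cofactor k div e"
    using \<open>cofactor k div e dvd cofactor k\<close> cofactor_pos [of k] by (metis dvd_0_left_iff neq0_conv)
  ultimately have f: "m * X \<le> f"
    unfolding m_def X_def f_def by (intro totient_ge_density) auto
  have X0: "0 \<le> X" unfolding X_def totient_density_def
    using one_minus_inverse_p_nonneg by (intro prod_nonneg) auto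
  have whole: "totient_density {1..r} = (1 - 1 / q) * X"
    unfolding X_def q_def totient_density_def using k by (subst prod.remove [of _ k]) auto
  have key: "q \<le> (real e + q - 1) * X"
    using cond
  proof
    assume "half_totient_cond"
    moreover have "(1 - 1 / q) * X \<le> X" using X0 q by (simp add: mult_left_le_one_le)
    ultimately have "1 / 2 \<le> X" using totient_density_ge_half whole by linarith
    moreover have "2 * q \<le> real e + q - 1"
      using pj p_less [OF k j] unfolding q_def by simp
    ultimately have "2 * q * (1 / 2) \<le> (real e + q - 1) * X"
      using q by (intro mult_mono) auto
    then show ?thesis by simp
  next
    assume "totient_chain_cond"
    then have "r * (p k - 1) \<le> p j - 1" by (rule totient_chain_cond_iterate [OF _ k j])
    then have "real r * (q - 1) \<le> real (p j) - 1"
      unfolding q_def using real_p_minus_1 [OF k] real_p_minus_1 [OF j(1)]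
      by (metis of_nat_le_iff of_nat_mult)
    then have "(real r + 1) * (q - 1) \<le> real e + q - 1" using pj by (simp add: algebra_simps)
    moreover have "1 / real (r + 1) \<le> (1 - 1 / q) * X"
      using totient_density_interval_ge [of 1 r] r_ge_2 whole by simp
    then have "q \<le> (real r + 1) * (q - 1) * X"
      using q by (simp add: field_simps)
    ultimately show ?thesis
      using mult_right_mono [OF _ X0] by (blast intro: order_trans)
  qed
  have "q * m \<le> (real e + q - 1) * X * m"
    using key unfolding m_def by (intro mult_right_mono) auto
  also have "\<dots> \<le> (real e + q - 1) * f"
    using f q pj p_gt_1 [OF j(1)] by (simp add: mult.assoc mult.commute [of X] mult_left_mono)
  also have "\<dots> \<le> G + (q - 1) * f" using G by (simp add: algebra_simps)
  finally show ?thesis unfolding q_def m_def G_def f_def by (simp add: mult.commute)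
qed

lemma divisor_split_least_prime:
  assumes "e dvd n" "1 < e"
  obtains k g e' where "k \<in> {1..r}" "1 \<le> g" "g \<le> \<alpha> k" "e = p k ^ g * e'" "e' dvd cofactor k"
    "\<forall>j\<in>{1..r}. p j dvd e' \<longrightarrow> k < j"
proof -
  let ?K = "{i\<in>{1..r}. p i dvd e}"
  obtain q where q: "prime q" "q dvd e" using prime_factor_nat [of e] assms(2) by auto
  then obtain i where "i \<in> {1..r}" "q = p i"
    using prime_dvd_n_obtain dvd_trans [OF q(2) assms(1)] by metis
  then have "?K \<noteq> {}" using q by auto
  define k where "k = Min ?K"
  have k: "k \<in> {1..r}" "p k dvd e"
    using Min_in [of ?K] \<open>?K \<noteq> {}\<close> unfolding k_def by auto
  have k_least: "k \<le> j" if "j \<in> {1..r}" "p j dvd e" for j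
    unfolding k_def using that by (intro Min_le) auto
  have pk: "prime (p k)" by (rule prime_p [OF k(1)])
  define g where "g = multiplicity (p k) e"
  define e' where "e' = e div p k ^ g"
  have e: "e = p k ^ g * e'" unfolding e'_def g_def by (simp add: multiplicity_dvd)
  have not_dvd: "\<not> p k dvd e'"
    unfolding e'_def g_def by (rule multiplicity_decompose) (use assms pk not_prime_unit in auto)
  have "g \<noteq> 0"
  proof
    assume "g = 0"
    then show False using e not_dvd k(2) by simp
  qed
  have "e' dvd pp k * cofactor k"
    using e assms(1) n_eq_pp_cofactor [OF k(1)] by (metis dvd_mult_right)
  moreover have "coprime e' (pp k)"
    unfolding pp_def by (rule prime_imp_power_coprime_nat [OF pk not_dvd])
  ultimately have "e' dvd cofactor k" by (simp add: coprime_dvd_mult_right_iff)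
  have "p k ^ g dvd pp k * cofactor k"
    using e assms(1) n_eq_pp_cofactor [OF k(1)] by (metis dvd_mult_left)
  moreover have "coprime (p k ^ g) (cofactor k)"
    using prime_imp_coprime_nat [OF pk] p_not_dvd_cofactor [OF k(1)] by (simp add: coprime_power_left_iff)
  ultimately have "p k ^ g dvd p k ^ \<alpha> k" unfolding pp_def by (simp add: coprime_dvd_mult_left_iff)
  then have "g \<le> \<alpha> k" using prime_ge_2_nat [OF pk] by (simp add: dvd_power_iff_le)
  moreover have "\<forall>j\<in>{1..r}. p j dvd e' \<longrightarrow> k < j"
  proof (intro ballI impI)
    fix j assume j: "j \<in> {1..r}" "p j dvd e'"
    then have "k \<le> j" using k_least e by (simp add: dvd_mult)
    moreover have "j \<noteq> k" using j(2) not_dvd by auto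
    ultimately show "k < j" by simp
  qed
  ultimately show thesis
    using that [of k g e'] k(1) \<open>g \<noteq> 0\<close> e \<open>e' dvd cofactor k\<close> by simp
qed

lemma exists_pp_nbhd_card_le:
  assumes cond: "half_totient_cond \<or> totient_chain_cond"
  shows "e dvd n \<Longrightarrow> 1 < e \<Longrightarrow> \<exists>k\<in>{1..r}. nbhd_card n (pp k) \<le> nbhd_card n e"
proof (induction e rule: less_induct)
  case (less e)
  obtain k g e' where k: "k \<in> {1..r}" and g: "1 \<le> g" "g \<le> \<alpha> k" and e: "e = p k ^ g * e'"
    and e': "e' dvd cofactor k" and above: "\<forall>j\<in>{1..r}. p j dvd e' \<longrightarrow> k < j"
    by (rule divisor_split_least_prime [OF less.prems])
  show ?case
  proof (cases "e' = 1")
    case True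
    then show ?thesis using nbhd_card_pp_le_prime_power [OF k g] k e by auto
  next
    case False
    moreover have "e' \<noteq> 0" using e less.prems(2) by (metis mult_0_right not_less_zero)
    ultimately have "1 < e'" by simp
    then obtain q where q: "prime q" "q dvd e'" using prime_factor_nat [of e'] by auto
    have "e' dvd n" using e less.prems(1) by (metis dvd_mult_right)
    then obtain j where j: "j \<in> {1..r}" "q = p j"
      using prime_dvd_n_obtain [OF q(1)] dvd_trans [OF q(2)] by metis
    have "nbhd_card n e' \<le> nbhd_card n e"
      unfolding e using q j above
      by (intro nbhd_card_le_mult_prime_power [OF k g e'] cofactor_slack [OF cond k j(1) _ e']) auto
    moreover have "e' < e"
    proof -
      have "1 < p k ^ g" using p_gt_1 [OF k] g by (intro one_less_power) auto
      then have "1 * e' < p k ^ g * e'" using \<open>1 < e'\<close> by (intro mult_strict_right_mono) auto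
      then show ?thesis using e by simp
    qed
    ultimately show ?thesis using less.IH [OF _ \<open>e' dvd n\<close> \<open>1 < e'\<close>] by (meson order.trans)
  qed
qed

section \<open>Comparing full prime powers\<close>

lemma nbhd_card_pp:
  assumes "s \<in> {1..r}"
  shows "real (nbhd_card n (pp s))
    = real (cofactor s) + real (pp s) * real (totient (cofactor s)) - real (totient (cofactor s))"
  using nbhd_card_mult_pp [OF assms one_dvd] root_card_one [OF cofactor_pos] by simp

lemma totient_ge_of_density_2:
  assumes "m > 0" "prime_factors m \<subseteq> p ` {2..r}"
  shows "2 * real m \<le> (real r + 1) * real (totient m)"
proof -
  have "real m * (2 / real (r + 1)) \<le> real m * totient_density {2..r}"
    using totient_density_interval_ge [of 2 r] r_ge_2 by (intro mult_left_mono) auto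
  also have "\<dots> \<le> real (totient m)" using assms by (intro totient_ge_density) auto
  finally show ?thesis by (simp add: field_simps)
qed

lemma totient_ge_of_half_totient_cond:
  assumes "half_totient_cond" "m > 0" "prime_factors m \<subseteq> p ` {1..r}"
  shows "real m \<le> 2 * real (totient m)"
proof -
  have "real m * (1 / 2) \<le> real m * totient_density {1..r}"
    using totient_density_ge_half [OF assms(1)] by (intro mult_left_mono) auto
  also have "\<dots> \<le> real (totient m)" using assms by (intro totient_ge_density) auto
  finally show ?thesis by simp
qed

lemma totient_ge_of_inner_factors:
  assumes "m > 0" "prime_factors m \<subseteq> p ` {2..r - 1}"
  shows "real (p 1) * real m \<le> (real (p r) - 1) * real (totient m)"
proof -
  have r: "r - 1 \<in> {1..r}" "r \<in> {1..r}" "r - 1 < r" using r_ge_2 by auto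
  have pr: "0 < real (p (r - 1))" "real (p (r - 1)) \<le> real (p r) - 1"
    using p_gt_1 [OF r(1)] p_less [OF r] by simp_all
  have "real m * (real (p 1) / real (p (r - 1))) \<le> real m * totient_density {2..r - 1}"
    using totient_density_ge_ratio [of "r - 1"] r_ge_2 by (intro mult_left_mono) auto
  also have "\<dots> \<le> real (totient m)" using assms by (intro totient_ge_density) auto
  finally have "real (p 1) * real m \<le> real (p (r - 1)) * real (totient m)"
    using pr by (simp add: field_simps)
  also have "\<dots> \<le> (real (p r) - 1) * real (totient m)"
    using pr by (intro mult_right_mono) auto
  finally show ?thesis .
qed

lemma pp_less_pp:
  assumes "j \<in> {1..r}" "t \<in> {1..r}" "j < t" "\<alpha> j \<le> \<alpha> t"
  shows "pp j < pp t"
proof -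
  have "p j ^ \<alpha> j \<le> p j ^ \<alpha> t" using assms p_gt_1 [OF assms(1)] by (intro power_increasing) auto
  also have "\<dots> < p t ^ \<alpha> t"
    using p_less [OF assms(1-3)] alpha_pos [OF assms(2)] by (intro power_strict_mono) auto
  finally show ?thesis unfolding pp_def .
qed

lemma nbhd_card_pp_pair:
  assumes "j \<in> {1..r}" "t \<in> {1..r}" "j \<noteq> t"
  shows "real (nbhd_card n (pp j)) = real (pp t) * real (pp_prod ({1..r} - {j, t}))
    + (real (pp j) - 1) * real (totient (pp t)) * real (totient (pp_prod ({1..r} - {j, t})))"
  using nbhd_card_pp [OF assms(1)] cofactor_eq_pp_mult [OF assms]
  by (simp add: totient_mult_coprime algebra_simps)

lemma real_pp: "s \<in> {1..r} \<Longrightarrow> real (pp s) = real (p s) * real (p s) ^ (\<alpha> s - 1)"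
  unfolding pp_def using alpha_pos [of s] by (simp flip: power_Suc)

lemma real_totient_pp: "s \<in> {1..r} \<Longrightarrow> real (totient (pp s)) = (real (p s) - 1) * real (p s) ^ (\<alpha> s - 1)"
  unfolding pp_def using totient_p_power [of s "\<alpha> s"] alpha_pos [of s] by simp

lemma nbhd_card_pp_le_of_less:
  assumes cond: "half_totient_cond \<or> totient_chain_cond"
    and t: "t \<in> {2..r}" and t_max: "\<forall>i\<in>{2..r}. \<alpha> i \<le> \<alpha> t"
    and t_last: "\<forall>i\<in>{2..r}. \<alpha> i = \<alpha> t \<longrightarrow> i \<le> t"
    and j: "j \<in> {1..r}" "j < t"
  shows "nbhd_card n (pp t) \<le> nbhd_card n (pp j)"
proof -
  have t1: "t \<in> {1..r}" using t by auto
  define M0 where "M0 = pp_prod ({1..r} - {j, t})"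
  define a b P Q M \<mu> where "a = real (p j)" and "b = real (p t)"
    and "P = a ^ (\<alpha> j - 1)" and "Q = b ^ (\<alpha> t - 1)"
    and "M = real M0" and "\<mu> = real (totient M0)"
  have M0: "0 < M0" unfolding M0_def by (rule pp_prod_pos) auto
  have ab: "2 \<le> a" "a + 1 \<le> b"
    unfolding a_def b_def using p_gt_1 [OF j(1)] p_less [OF j(1) t1 j(2)] by simp_all
  have PQ: "1 \<le> P" "1 \<le> Q" unfolding P_def Q_def using ab by simp_all
  have \<mu>: "0 \<le> \<mu>" "\<mu> \<le> M" unfolding \<mu>_def M_def by (simp_all add: totient_le)
  have "real (nbhd_card n (pp j)) - real (nbhd_card n (pp t))
      = (M - \<mu>) * (b * Q - a * P) + \<mu> * (P * Q * (b - a) + Q - P)"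
    using nbhd_card_pp_pair [OF j(1) t1] nbhd_card_pp_pair [OF t1 j(1)] j(2)
      real_pp [OF j(1)] real_pp [OF t1] real_totient_pp [OF j(1)] real_totient_pp [OF t1]
    unfolding a_def b_def P_def Q_def M_def \<mu>_def M0_def
    by (simp add: insert_commute algebra_simps)
  moreover have "0 \<le> (M - \<mu>) * (b * Q - a * P) + \<mu> * (P * Q * (b - a) + Q - P)"
  proof (cases "a * P \<le> b * Q")
    case True
    then show ?thesis using exchange_nonneg_of_le \<mu> PQ ab by blast
  next
    case False
    have "j = 1"
    proof (rule ccontr)
      assume "j \<noteq> 1"
      then have "pp j < pp t" using j t1 t_max by (intro pp_less_pp) auto
      then show False
        using False real_pp [OF j(1)] real_pp [OF t1] unfolding a_def b_def P_def Q_def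
        by (metis of_nat_less_iff less_eq_real_def)
    qed
    show ?thesis
    proof (cases "\<alpha> t = 1")
      case True
      have "\<alpha> r \<le> 1" "0 < \<alpha> r" using t_max True alpha_pos [of r] r_ge_2 by auto
      then have "\<alpha> r = 1" by simp
      then have "r \<le> t" using t_last True r_ge_2 by auto
      then have "t = r" using t by simp
      then have "{1..r} - {j, t} = {2..r - 1}" using \<open>j = 1\<close> r_ge_2 by auto
      then have "prime_factors M0 \<subseteq> p ` {2..r - 1}"
        unfolding M0_def by (subst prime_factors_pp_prod) auto
      then have "a * M \<le> (b - 1) * \<mu>"
        using totient_ge_of_inner_factors [OF M0] \<open>j = 1\<close> \<open>t = r\<close>
        unfolding a_def b_def M_def \<mu>_def by simp
      moreover have "Q = 1" unfolding Q_def using True by simp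
      ultimately show ?thesis using exchange_nonneg_unit \<mu> PQ ab by simp
    next
      case False
      then have "b ^ 1 \<le> Q" unfolding Q_def using ab alpha_pos [OF t1] by (intro power_increasing) auto
      then have bQ: "b \<le> Q" by simp
      from cond show ?thesis
      proof
        assume "half_totient_cond"
        moreover have "prime_factors M0 \<subseteq> p ` {1..r}"
          unfolding M0_def by (subst prime_factors_pp_prod) auto
        ultimately have "M \<le> 2 * \<mu>"
          using totient_ge_of_half_totient_cond [OF _ M0] unfolding M_def \<mu>_def by simp
        then show ?thesis
          using exchange_nonneg_half \<mu> PQ bQ ab \<open>\<not> a * P \<le> b * Q\<close> by simp
      next
        assume chain: "totient_chain_cond"
        have "prime_factors M0 \<subseteq> p ` {2..r}"
          unfolding M0_def using \<open>j = 1\<close> by (subst prime_factors_pp_prod) auto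
        then have "2 * M \<le> (real r + 1) * \<mu>"
          using totient_ge_of_density_2 [OF M0] unfolding M_def \<mu>_def by simp
        moreover have "r * (p 1 - 1) \<le> p t - 1"
          using totient_chain_cond_iterate [OF chain _ t1] j \<open>j = 1\<close> by simp
        then have "real r * (a - 1) \<le> b - 1"
          using real_p_minus_1 [OF j(1)] real_p_minus_1 [OF t1] \<open>j = 1\<close>
          unfolding a_def b_def by (metis of_nat_le_iff of_nat_mult)
        ultimately show ?thesis
          using exchange_nonneg_chain [of \<mu> M "real r"] \<mu> PQ bQ ab r_ge_2 \<open>\<not> a * P \<le> b * Q\<close>
          by simp
      qed
    qed
  qed
  ultimately show ?thesis by simp
qed

section \<open>The minimum degree\<close>

lemma exists_candidate_deg_le:
  assumes cond: "half_totient_cond \<or> totient_chain_cond"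
    and t: "t \<in> {2..r}" and t_max: "\<forall>i\<in>{2..r}. \<alpha> i \<le> \<alpha> t"
    and t_last: "\<forall>i\<in>{2..r}. \<alpha> i = \<alpha> t \<longrightarrow> i \<le> t"
    and a: "a < n"
  shows "\<exists>s\<in>{t..r}. pg_deg n (pp s) \<le> pg_deg n a"
proof -
  have "\<exists>s\<in>{t..r}. nbhd_card n (pp s) \<le> nbhd_card n (gcd a n)"
  proof (cases "gcd a n = 1")
    case True
    then have "nbhd_card n (gcd a n) = n" by (simp only: nbhd_card_one)
    then show ?thesis using nbhd_card_le [of n "pp t"] t by (intro bexI [of _ t]) auto
  next
    case False
    then have "1 < gcd a n" using n_pos by (simp add: nat_neq_iff)
    then obtain k where k: "k \<in> {1..r}" "nbhd_card n (pp k) \<le> nbhd_card n (gcd a n)"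
      using exists_pp_nbhd_card_le [OF cond] by blast
    show ?thesis
    proof (cases "k < t")
      case True
      then have "nbhd_card n (pp t) \<le> nbhd_card n (pp k)"
        by (intro nbhd_card_pp_le_of_less [OF cond t t_max t_last k(1)])
      then show ?thesis using k(2) t by (intro bexI [of _ t]) auto
    qed (use k in auto)
  qed
  then obtain s where s: "s \<in> {t..r}" "nbhd_card n (pp s) \<le> nbhd_card n (gcd a n)" by blast
  then have "s \<in> {1..r}" using t by auto
  then have "pg_deg n (pp s) + 1 = nbhd_card n (pp s)"
    using pg_deg_eq_nbhd_card [OF n_pos pp_less_n] pp_dvd_n by (simp add: gcd_proj1_iff)
  then show ?thesis using s pg_deg_eq_nbhd_card [OF n_pos a] by (intro bexI [of _ s]) auto
qed

end

lemma last_argmax: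
  fixes \<alpha> :: "nat \<Rightarrow> nat"
  assumes "finite A" "A \<noteq> {}" "t = Max {t\<in>A. \<forall>j\<in>A. \<alpha> t \<ge> \<alpha> j}"
  shows "t \<in> A" "\<forall>i\<in>A. \<alpha> i \<le> \<alpha> t" "\<forall>i\<in>A. \<alpha> i = \<alpha> t \<longrightarrow> i \<le> t"
proof -
  let ?T = "{t\<in>A. \<forall>j\<in>A. \<alpha> t \<ge> \<alpha> j}"
  have "Max (\<alpha> ` A) \<in> \<alpha> ` A" using assms(1,2) by simp
  then obtain t0 where "t0 \<in> A" "\<alpha> t0 = Max (\<alpha> ` A)" by (metis imageE)
  then have "t0 \<in> ?T" using assms(1) by auto
  then have "t \<in> ?T" unfolding assms(3) using assms(1) by (intro Max_in) auto
  then show "t \<in> A" "\<forall>i\<in>A. \<alpha> i \<le> \<alpha> t" by auto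
  show "\<forall>i\<in>A. \<alpha> i = \<alpha> t \<longrightarrow> i \<le> t"
    using \<open>t \<in> ?T\<close> assms(1) unfolding assms(3) by (auto intro: Max_ge)
qed

lemma pg_min_deg_eq_Min:
  assumes "0 < n" "finite S" "S \<noteq> {}" "\<forall>s\<in>S. c s < n"
    and "\<forall>a<n. \<exists>s\<in>S. pg_deg n (c s) \<le> pg_deg n a"
  shows "pg_min_deg n = Min {pg_deg n (c s) | s. s \<in> S}"
  unfolding pg_min_deg_def
proof (rule antisym)
  have "{pg_deg n (c s) | s. s \<in> S} \<subseteq> pg_deg n ` {0..<n}" using assms(4) by auto
  then show "Min (pg_deg n ` {0..<n}) \<le> Min {pg_deg n (c s) | s. s \<in> S}"
    using assms(2,3) by (intro Min_antimono) auto
  show "Min {pg_deg n (c s) | s. s \<in> S} \<le> Min (pg_deg n ` {0..<n})"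
  proof (rule Min.boundedI)
    fix d assume "d \<in> pg_deg n ` {0..<n}"
    then obtain a where "a < n" "d = pg_deg n a" by auto
    then obtain s where "s \<in> S" "pg_deg n (c s) \<le> d" using assms(5) by blast
    moreover have "Min {pg_deg n (c s) | s. s \<in> S} \<le> pg_deg n (c s)"
      using assms(2) \<open>s \<in> S\<close> by (intro Min_le) auto
    ultimately show "Min {pg_deg n (c s) | s. s \<in> S} \<le> d" by simp
  qed (use assms(1) in auto)
qed

theorem theorem1p3:
  fixes n r :: nat and p \<alpha> :: "nat \<Rightarrow> nat"
  assumes r2: "r \<ge> 2"
    and primes: "\<forall>i\<in>{1..r}. prime (p i)"
    and incr: "\<forall>i\<in>{1..<r}. p i < p (i + 1)"
    and pos: "\<forall>i\<in>{1..r}. \<alpha> i \<ge> 1"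
    and n_def: "n = (\<Prod>i=1..r. p i ^ \<alpha> i)"
    and cond: "2 * totient (\<Prod>i=1..r. p i) \<ge> (\<Prod>i=1..r. p i)
               \<or> (\<forall>i\<in>{1..<r}. totient (p (i + 1)) \<ge> r * totient (p i))"
    and t_def: "t = Max {t\<in>{2..r}. \<forall>j\<in>{2..r}. \<alpha> t \<ge> \<alpha> j}"
  shows "pg_min_deg n = Min {pg_deg n (p s ^ \<alpha> s) | s. s \<in> {t..r}}"
proof -
  interpret ordered_factorization n r p \<alpha>
    using r2 primes incr pos n_def by unfold_locales
  have "{2..r} \<noteq> {}" using r2 by simp
  note t = last_argmax [OF finite_atLeastAtMost this t_def]
  show ?thesis
  proof (rule pg_min_deg_eq_Min)
    show "\<forall>s\<in>{t..r}. p s ^ \<alpha> s < n"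
      using t pp_less_n unfolding pp_def by auto
    show "\<forall>a<n. \<exists>s\<in>{t..r}. pg_deg n (p s ^ \<alpha> s) \<le> pg_deg n a"
      using exists_candidate_deg_le [OF cond t] unfolding pp_def by blast
  qed (use n_pos t in auto)
qed

end
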